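(* Let $m,M,q,Q\ge1$ with $2m+q+1=2M+Q+1=n$. Let $\mathcal{A}=(A_0,\ldots,A_q)$ be a symmetric Clifford system on $\mathbb{R}^{2m}$ and $\mathcal{B}=(B_0,\ldots,B_Q)$ a symmetric Clifford system on $\mathbb{R}^{2M}$, and consider the cubics on $\mathbb{R}^n$ $$\Phi_{\mathcal{A}}(x)=\sum_{i=0}^q z_i\,y^TA_iy,\quad x=(y,z)\in\mathbb{R}^{2m}\oplus\mathbb{R}^{q+1}\cong\mathbb{R}^n,\qquad \Phi_{\mathcal{B}}(X)=\sum_{j=0}^Q Z_j\,Y^TB_jY,\quad X=(Y,Z)\in\mathbb{R}^{2M}\oplus\mathbb{R}^{Q+1}\cong\mathbb{R}^n.$$ If $\Phi_{\mathcal{A}}$ and $\Phi_{\mathcal{B}}$ are congruent, then $q=Q$.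
   Context: A (symmetric) Clifford system on $\mathbb{R}^{2m}$ with $q\ge1$ is a tuple $(A_0,\ldots,A_q)$ of symmetric $2m\times2m$ real matrices with $A_iA_j+A_jA_i=2\delta_{ij}I$ for all $0\le i,j\le q$. Two homogeneous polynomials $f_1,f_2$ on $\mathbb{R}^n$ are congruent if $f_1(x)=c\,f_2(Ux)$ for all $x$, for some orthogonal linear map $U$ of $\mathbb{R}^n$ and some real $c\neq0$. *)

theory Defs
  imports Main "HOL-Analysis.Analysis"
begin

text \<open>Vectors in R^k are represented as functions nat => real, only the coordinates
  with index < k being relevant; k x k matrices as nat => nat => real (entry (r,s)).\<close>

definition clifford_system :: "nat \<Rightarrow> nat \<Rightarrow> (nat \<Rightarrow> nat \<Rightarrow> nat \<Rightarrow> real) \<Rightarrow> bool" where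
  "clifford_system m q A \<longleftrightarrow>
     (\<forall>i\<le>q. \<forall>r<2*m. \<forall>s<2*m. A i r s = A i s r) \<and>
     (\<forall>i\<le>q. \<forall>j\<le>q. \<forall>r<2*m. \<forall>s<2*m.
        (\<Sum>k<2*m. A i r k * A j k s) + (\<Sum>k<2*m. A j r k * A i k s)
          = (if i = j \<and> r = s then 2 else 0))"

definition Phi :: "nat \<Rightarrow> nat \<Rightarrow> (nat \<Rightarrow> nat \<Rightarrow> nat \<Rightarrow> real) \<Rightarrow> (nat \<Rightarrow> real) \<Rightarrow> real" where
  "Phi m q A x = (\<Sum>i\<le>q. x (2*m + i) * (\<Sum>r<2*m. \<Sum>s<2*m. x r * A i r s * x s))"

definition orthogonal_mat :: "nat \<Rightarrow> (nat \<Rightarrow> nat \<Rightarrow> real) \<Rightarrow> bool" where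
  "orthogonal_mat n U \<longleftrightarrow>
     (\<forall>i<n. \<forall>j<n. (\<Sum>k<n. U k i * U k j) = (if i = j then 1 else 0))"

definition mat_apply :: "nat \<Rightarrow> (nat \<Rightarrow> nat \<Rightarrow> real) \<Rightarrow> (nat \<Rightarrow> real) \<Rightarrow> (nat \<Rightarrow> real)" where
  "mat_apply n U x = (\<lambda>i. if i < n then (\<Sum>j<n. U i j * x j) else 0)"

definition congruent_on :: "nat \<Rightarrow> ((nat \<Rightarrow> real) \<Rightarrow> real) \<Rightarrow> ((nat \<Rightarrow> real) \<Rightarrow> real) \<Rightarrow> bool" where
  "congruent_on n f g \<longleftrightarrow>
     (\<exists>U c. orthogonal_mat n U \<and> c \<noteq> 0 \<and>
        (\<forall>x. (\<forall>i\<ge>n. x i = 0) \<longrightarrow> f x = c * g (mat_apply n U x)))"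

end

theory Submission
  imports "Jordan_Normal_Form.Determinant" "HOL-Library.Function_Algebras" Defs
begin

(* For a cubic form f, the quadratic form x \<mapsto> tr ((Hess f x)^2) is an orthogonal invariant of
   weight two: if Phi_A = c (Phi_B o U) with U orthogonal, then its Gram matrix G_A equals
   c^2 U^T G_B U. The Clifford relations make the Gram matrix of a Clifford cubic diagonal, with
   entry proportional to q + 1 on the y-coordinates and to m on the z-coordinates. Hence
   c^2 (Q + 1) and c^2 M both lie in {q + 1, m}, and comparing traces gives
   m (q + 1) = c^2 M (Q + 1); together with 2m + q = 2M + Q this forces q = Q. *)

lemma orthogonal_mat_rows:
  assumes "orthogonal_mat n U" "i < n" "j < n"
  shows "(\<Sum>k<n. U i k * U j k) = (if i = j then 1 else 0)"
proof -
  have scalar_prod: "\<And>f g. Matrix.scalar_prod (Matrix.vec n f) (Matrix.vec n g) = (\<Sum>k<n. f k * g k)"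
    by (simp add: Matrix.scalar_prod_def lessThan_atLeast0)
  define W where "W = Matrix.mat n n (\<lambda>(a,b). U a b)"
  have W: "W \<in> carrier_mat n n" and Wt: "transpose_mat W \<in> carrier_mat n n"
    unfolding W_def by auto
  have "transpose_mat W * W = 1\<^sub>m n"
  proof (rule eq_matI)
    fix a b assume "a < dim_row (1\<^sub>m n :: real mat)" "b < dim_col (1\<^sub>m n :: real mat)"
    then have ab: "a < n" "b < n" by auto
    have "(transpose_mat W * W) $$ (a,b) = (\<Sum>k<n. U k a * U k b)"
      using ab unfolding W_def by (simp add: Matrix.row_def Matrix.col_def scalar_prod)
    then show "(transpose_mat W * W) $$ (a,b) = 1\<^sub>m n $$ (a,b)"
      using assms(1) ab unfolding orthogonal_mat_def by auto
  qed (auto simp: W_def)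
  then have "W * transpose_mat W = 1\<^sub>m n"
    by (rule mat_mult_left_right_inverse[OF Wt W])
  then have "(W * transpose_mat W) $$ (i,j) = 1\<^sub>m n $$ (i,j)" by simp
  then show ?thesis using assms(2,3) unfolding W_def
    by (simp add: Matrix.row_def Matrix.col_def scalar_prod)
qed

lemma orthonormal_rows_transpose_inner:
  fixes U :: "nat \<Rightarrow> nat \<Rightarrow> real"
  assumes orth: "\<And>i j. i < n \<Longrightarrow> j < n \<Longrightarrow> (\<Sum>k<n. U i k * U j k) = (if i = j then 1 else 0)"
  shows "(\<Sum>a<n. (\<Sum>k<n. U k a * f k) * (\<Sum>k<n. U k a * g k)) = (\<Sum>k<n. f k * g k)"
proof -
  have "(\<Sum>a<n. (\<Sum>k<n. U k a * f k) * (\<Sum>k<n. U k a * g k))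
      = (\<Sum>a<n. \<Sum>k<n. \<Sum>l<n. U k a * f k * (U l a * g l))" by (simp add: sum_product)
  also have "\<dots> = (\<Sum>k<n. \<Sum>l<n. \<Sum>a<n. U k a * f k * (U l a * g l))"
    by (subst sum.swap) (intro sum.cong refl sum.swap)
  also have "\<dots> = (\<Sum>k<n. \<Sum>l<n. f k * g l * (\<Sum>a<n. U k a * U l a))"
    by (simp add: sum_distrib_left mult_ac)
  also have "\<dots> = (\<Sum>k<n. \<Sum>l<n. if k = l then f k * g l else 0)"
    by (intro sum.cong refl) (simp add: orth)
  also have "\<dots> = (\<Sum>k<n. f k * g k)" by simp
  finally show ?thesis .
qed

definition std_basis :: "nat \<Rightarrow> nat \<Rightarrow> real" where
  "std_basis a = (\<lambda>j. if j = a then 1 else 0)"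

lemma std_basis_same [simp]: "std_basis k k = 1"
  by (simp add: std_basis_def)

lemma std_basis_supported [simp]: "k < n \<Longrightarrow> \<forall>i\<ge>n. std_basis k i = 0"
  by (simp add: std_basis_def)

lemma std_basis_below: "s < N \<Longrightarrow> \<not> a < N \<Longrightarrow> std_basis a s = 0"
  by (auto simp: std_basis_def)

lemma std_basis_shift_below: "a < N \<Longrightarrow> std_basis a (N + i) = 0"
  by (simp add: std_basis_def)

lemma std_basis_shift: "std_basis (N + j) (N + i) = (if i = j then 1 else 0)"
  by (simp add: std_basis_def)

lemma sum_std_basis:
  assumes "k < n"
  shows "(\<Sum>l<n. f l * std_basis k l * g l) = f k * g k"
proof -
  have "(\<Sum>l<n. f l * std_basis k l * g l) = (\<Sum>l<n. if l = k then f k * g k else 0)"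
    by (intro sum.cong refl) (simp add: std_basis_def)
  then show ?thesis using assms by simp
qed

lemma sum_std_basis_right: "k < n \<Longrightarrow> (\<Sum>l<n. f l * std_basis k l) = f k"
  using sum_std_basis[of k n f "\<lambda>_. 1"] by simp

lemma mat_apply_add: "mat_apply n U (u + v) = mat_apply n U u + mat_apply n U v"
  unfolding mat_apply_def by (auto simp: fun_eq_iff algebra_simps sum.distrib)

lemma mat_apply_std_basis:
  "k < n \<Longrightarrow> mat_apply n U (std_basis k) = (\<lambda>i. if i < n then U i k else 0)"
  unfolding mat_apply_def by (simp add: sum_std_basis_right cong: if_cong)

lemma mat_apply_row:
  assumes U: "orthogonal_mat n U" and j: "j < n"
  shows "mat_apply n U (\<lambda>k. if k < n then U j k else 0) = std_basis j"
  using j orthogonal_mat_rows[OF U _ j]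
  by (auto simp: mat_apply_def std_basis_def fun_eq_iff mult.commute cong: if_cong)

lemma linear_coordinate_expansion:
  fixes F :: "(nat \<Rightarrow> real) \<Rightarrow> real"
  assumes add: "\<And>u u'. F (u + u') = F u + F u'"
    and scale: "\<And>c u. F (\<lambda>j. c * u j) = c * F u"
    and loc: "\<And>u u'. (\<forall>j<n. u j = u' j) \<Longrightarrow> F u = F u'"
  shows "F u = (\<Sum>k<n. u k * F (std_basis k))"
proof -
  have tail: "F u = (\<Sum>k<N. u k * F (std_basis k)) + F (\<lambda>j. if j < N then 0 else u j)" for N
  proof (induction N)
    case 0
    then show ?case by simp
  next
    case (Suc N)
    have "(\<lambda>j. if j < N then 0 else u j)
        = (\<lambda>j. u N * std_basis N j) + (\<lambda>j. if j < Suc N then 0 else u j)"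
      by (auto simp: std_basis_def fun_eq_iff less_Suc_eq)
    then have "F (\<lambda>j. if j < N then 0 else u j)
        = u N * F (std_basis N) + F (\<lambda>j. if j < Suc N then 0 else u j)"
      using add scale by (metis (no_types))
    then show ?case using Suc by simp
  qed
  have "F (\<lambda>j. if j < n then 0 else u j) = F (\<lambda>j. 0 * u j)" by (rule loc) simp
  also have "\<dots> = 0" using scale[of 0 u] by simp
  finally show ?thesis using tail[of n] by simp
qed

section \<open>Trace forms\<close>

text \<open>If T is the polarization of a cubic f, then T x is a multiple of the Hessian of f at x,
  so trace_form n T x x is a multiple of tr ((Hess f x)^2).\<close>

definition trace_form :: "nat \<Rightarrow> ((nat \<Rightarrow> real) \<Rightarrow> (nat \<Rightarrow> real) \<Rightarrow> (nat \<Rightarrow> real) \<Rightarrow> real)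
    \<Rightarrow> (nat \<Rightarrow> real) \<Rightarrow> (nat \<Rightarrow> real) \<Rightarrow> real" where
  "trace_form n T x x' =
     (\<Sum>a<n. \<Sum>b<n. T x (std_basis a) (std_basis b) * T x' (std_basis a) (std_basis b))"

lemma bilinear_at_columns:
  assumes expand2: "\<And>u v. T w u v = (\<Sum>k<n. u k * T w (std_basis k) v)"
    and expand3: "\<And>u v. T w u v = (\<Sum>l<n. v l * T w u (std_basis l))"
    and a: "a < n" and b: "b < n"
  shows "T w (mat_apply n U (std_basis a)) (mat_apply n U (std_basis b))
       = (\<Sum>k<n. U k a * (\<Sum>l<n. U l b * T w (std_basis k) (std_basis l)))"
proof -
  let ?Ua = "mat_apply n U (std_basis a)" and ?Ub = "mat_apply n U (std_basis b)"
  have "T w ?Ua ?Ub = (\<Sum>k<n. ?Ua k * T w (std_basis k) ?Ub)"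
    by (rule expand2)
  also have "\<dots> = (\<Sum>k<n. ?Ua k * (\<Sum>l<n. ?Ub l * T w (std_basis k) (std_basis l)))"
    by (intro sum.cong refl arg_cong2[where f = "(*)"] expand3)
  finally show ?thesis using a b by (simp add: mat_apply_std_basis)
qed

lemma trace_form_orthogonal_congruent:
  assumes U: "orthogonal_mat n U"
    and expand2: "\<And>w u v. T w u v = (\<Sum>k<n. u k * T w (std_basis k) v)"
    and expand3: "\<And>w u v. T w u v = (\<Sum>l<n. v l * T w u (std_basis l))"
    and congr: "\<And>x u v. (\<forall>i\<ge>n. x i = 0) \<Longrightarrow> (\<forall>i\<ge>n. u i = 0) \<Longrightarrow> (\<forall>i\<ge>n. v i = 0) \<Longrightarrow>
        S x u v = c * T (mat_apply n U x) (mat_apply n U u) (mat_apply n U v)"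
    and supp: "\<forall>i\<ge>n. x i = 0" "\<forall>i\<ge>n. x' i = 0"
  shows "trace_form n S x x' = c^2 * trace_form n T (mat_apply n U x) (mat_apply n U x')"
proof -
  note orth = orthogonal_mat_rows[OF U]
  define H where "H y k b = (\<Sum>l<n. U l b * T (mat_apply n U y) (std_basis k) (std_basis l))"
    for y k b
  have S_basis: "S y (std_basis a) (std_basis b) = c * (\<Sum>k<n. U k a * H y k b)"
    if "\<forall>i\<ge>n. y i = 0" "a < n" "b < n" for y a b
    using congr[OF that(1) std_basis_supported[OF that(2)] std_basis_supported[OF that(3)]]
      bilinear_at_columns[where T = T and w = "mat_apply n U y",
        OF expand2[of "mat_apply n U y"] expand3[of "mat_apply n U y"] that(2,3)]
    unfolding H_def by simp
  have "trace_form n S x x'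
      = (\<Sum>a<n. \<Sum>b<n. c^2 * ((\<Sum>k<n. U k a * H x k b) * (\<Sum>k<n. U k a * H x' k b)))"
    unfolding trace_form_def
    by (intro sum.cong refl) (simp add: S_basis supp power2_eq_square mult_ac)
  also have "\<dots> = c^2 * (\<Sum>b<n. \<Sum>a<n. (\<Sum>k<n. U k a * H x k b) * (\<Sum>k<n. U k a * H x' k b))"
    by (subst sum.swap) (simp add: sum_distrib_left)
  also have "\<dots> = c^2 * (\<Sum>b<n. \<Sum>k<n. H x k b * H x' k b)"
    by (simp only: orthonormal_rows_transpose_inner[OF orth])
  also have "\<dots> = c^2 * (\<Sum>k<n. \<Sum>l<n. T (mat_apply n U x) (std_basis k) (std_basis l)
                                         * T (mat_apply n U x') (std_basis k) (std_basis l))"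
    by (subst sum.swap) (simp only: H_def orthonormal_rows_transpose_inner[OF orth])
  finally show ?thesis unfolding trace_form_def .
qed

lemma diagonal_congruent_eigenvalue:
  assumes U: "orthogonal_mat n U"
    and congr: "\<And>x x'. (\<forall>i\<ge>n. x i = 0) \<Longrightarrow> (\<forall>i\<ge>n. x' i = 0) \<Longrightarrow>
        (\<Sum>k<n. d k * x k * x' k) = C * (\<Sum>k<n. e k * mat_apply n U x k * mat_apply n U x' k)"
    and j: "j < n"
  obtains k where "k < n" "C * e j = d k"
proof -
  define row where "row = (\<lambda>k. if k < n then U j k else 0)"
  have U_row: "mat_apply n U row = std_basis j"
    unfolding row_def by (rule mat_apply_row[OF U j])
  have eigen: "d k * U j k = C * e j * U j k" if k: "k < n" for k
  proof -
    have "d k * U j k = (\<Sum>l<n. d l * row l * std_basis k l)"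
      using k by (simp add: sum_std_basis_right row_def)
    also have "\<dots> = C * (\<Sum>l<n. e l * mat_apply n U row l * mat_apply n U (std_basis k) l)"
      by (rule congr) (use k in \<open>simp_all add: row_def\<close>)
    also have "\<dots> = C * e j * U j k"
      using j k by (simp add: U_row mat_apply_std_basis sum_std_basis)
    finally show ?thesis .
  qed
  have "\<exists>k<n. U j k \<noteq> 0"
  proof (rule ccontr)
    assume "\<not> (\<exists>k<n. U j k \<noteq> 0)"
    then have "(\<Sum>k<n. U j k * U j k) = 0" by simp
    with orthogonal_mat_rows[OF U j j] show False by simp
  qed
  then obtain k where "k < n" "U j k \<noteq> 0" by blast
  with eigen[of k] show thesis by (intro that) auto
qed

lemma diagonal_congruent_trace:
  assumes U: "orthogonal_mat n U"
    and congr: "\<And>x x'. (\<forall>i\<ge>n. x i = 0) \<Longrightarrow> (\<forall>i\<ge>n. x' i = 0) \<Longrightarrow>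
        (\<Sum>k<n. d k * x k * x' k) = C * (\<Sum>k<n. e k * mat_apply n U x k * mat_apply n U x' k)"
  shows "(\<Sum>k<n. d k) = C * (\<Sum>k<n. e k)"
proof -
  have "(\<Sum>k<n. d k) = (\<Sum>k<n. \<Sum>l<n. d l * std_basis k l * std_basis k l)"
    by (simp add: sum_std_basis)
  also have "\<dots> = (\<Sum>k<n. C * (\<Sum>l<n. e l * U l k * U l k))"
  proof (intro sum.cong refl)
    fix k assume "k \<in> {..<n}"
    then show "(\<Sum>l<n. d l * std_basis k l * std_basis k l) = C * (\<Sum>l<n. e l * U l k * U l k)"
      using congr[of "std_basis k" "std_basis k"] by (simp add: mat_apply_std_basis)
  qed
  also have "\<dots> = C * (\<Sum>k<n. \<Sum>l<n. e l * (U l k * U l k))"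
    by (simp add: sum_distrib_left mult.assoc)
  also have "\<dots> = C * (\<Sum>l<n. e l * (\<Sum>k<n. U l k * U l k))"
    by (subst sum.swap) (simp add: sum_distrib_left)
  also have "\<dots> = C * (\<Sum>l<n. e l)"
    by (simp add: orthogonal_mat_rows[OF U])
  finally show ?thesis .
qed

section \<open>Polarization of the Clifford cubic\<close>

definition polarization :: "((nat \<Rightarrow> real) \<Rightarrow> real)
    \<Rightarrow> (nat \<Rightarrow> real) \<Rightarrow> (nat \<Rightarrow> real) \<Rightarrow> (nat \<Rightarrow> real) \<Rightarrow> real" where
  "polarization f x u v = f (x + u + v) - f (x + u) - f (x + v) - f (u + v) + f x + f u + f v"

lemma polarization_sum:
  "polarization (\<lambda>y. \<Sum>i\<in>I. f i y) x u v = (\<Sum>i\<in>I. polarization (f i) x u v)"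
  unfolding polarization_def by (simp add: sum_subtractf sum.distrib)

lemma polarization_cubic_term:
  fixes b :: "(nat \<Rightarrow> real) \<Rightarrow> (nat \<Rightarrow> real) \<Rightarrow> real"
  assumes add_left: "\<And>u u' v. b (u + u') v = b u v + b u' v"
    and add_right: "\<And>u v v'. b u (v + v') = b u v + b u v'"
    and commute: "\<And>u v. b u v = b v u"
  shows "polarization (\<lambda>y. y k * b y y) x u v = 2 * (x k * b u v + u k * b x v + v k * b x u)"
proof -
  have "b u x = b x u" "b v x = b x v" "b v u = b u v" using commute by auto
  then show ?thesis unfolding polarization_def
    by (simp add: add_left add_right) (simp add: algebra_simps)
qed

lemma polarization_congruent:
  assumes congr: "\<And>x. (\<forall>i\<ge>n. x i = 0) \<Longrightarrow> f x = c * g (mat_apply n U x)"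
    and "\<forall>i\<ge>n. x i = 0" "\<forall>i\<ge>n. u i = 0" "\<forall>i\<ge>n. v i = 0"
  shows "polarization f x u v
       = c * polarization g (mat_apply n U x) (mat_apply n U u) (mat_apply n U v)"
  using assms(2-) unfolding polarization_def by (simp add: congr mat_apply_add algebra_simps)

definition bilinear_of :: "nat \<Rightarrow> (nat \<Rightarrow> nat \<Rightarrow> real) \<Rightarrow> (nat \<Rightarrow> real) \<Rightarrow> (nat \<Rightarrow> real) \<Rightarrow> real"
  where "bilinear_of N S u v = (\<Sum>r<N. \<Sum>s<N. u r * S r s * v s)"

lemma bilinear_of_add_left: "bilinear_of N S (u + u') v = bilinear_of N S u v + bilinear_of N S u' v"
  unfolding bilinear_of_def by (simp add: algebra_simps sum.distrib)

lemma bilinear_of_add_right: "bilinear_of N S u (v + v') = bilinear_of N S u v + bilinear_of N S u v'"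
  unfolding bilinear_of_def by (simp add: algebra_simps sum.distrib)

lemma bilinear_of_scale_left: "bilinear_of N S (\<lambda>j. c * u j) v = c * bilinear_of N S u v"
  unfolding bilinear_of_def by (simp add: sum_distrib_left mult_ac)

lemma bilinear_of_scale_right: "bilinear_of N S u (\<lambda>j. c * v j) = c * bilinear_of N S u v"
  unfolding bilinear_of_def by (simp add: sum_distrib_left mult_ac)

lemma bilinear_of_commute:
  assumes "\<And>r s. r < N \<Longrightarrow> s < N \<Longrightarrow> S r s = S s r"
  shows "bilinear_of N S u v = bilinear_of N S v u"
proof -
  have "bilinear_of N S u v = (\<Sum>r<N. \<Sum>s<N. v s * S s r * u r)"
    unfolding bilinear_of_def using assms by (intro sum.cong refl) (auto simp: mult.commute)
  also have "\<dots> = bilinear_of N S v u"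
    unfolding bilinear_of_def by (rule sum.swap)
  finally show ?thesis .
qed

lemma bilinear_of_std_basis_left:
  "bilinear_of N S (std_basis a) v = (if a < N then (\<Sum>s<N. S a s * v s) else 0)"
proof -
  have "bilinear_of N S (std_basis a) v = (\<Sum>r<N. (\<Sum>s<N. S r s * v s) * std_basis a r)"
    unfolding bilinear_of_def by (simp add: sum_distrib_left sum_distrib_right mult_ac)
  then show ?thesis by (simp add: sum_std_basis_right std_basis_below)
qed

lemma bilinear_of_std_basis_right:
  "bilinear_of N S u (std_basis b) = (if b < N then (\<Sum>r<N. u r * S r b) else 0)"
  unfolding bilinear_of_def by (simp add: sum_std_basis_right std_basis_below)

definition symmetric_system :: "nat \<Rightarrow> nat \<Rightarrow> (nat \<Rightarrow> nat \<Rightarrow> nat \<Rightarrow> real) \<Rightarrow> bool" where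
  "symmetric_system m q A \<longleftrightarrow> (\<forall>i\<le>q. \<forall>r<2*m. \<forall>s<2*m. A i r s = A i s r)"

lemma symmetric_systemD:
  "symmetric_system m q A \<Longrightarrow> i \<le> q \<Longrightarrow> r < 2*m \<Longrightarrow> s < 2*m \<Longrightarrow> A i r s = A i s r"
  by (simp add: symmetric_system_def)

definition Phi_polar :: "nat \<Rightarrow> nat \<Rightarrow> (nat \<Rightarrow> nat \<Rightarrow> nat \<Rightarrow> real)
    \<Rightarrow> (nat \<Rightarrow> real) \<Rightarrow> (nat \<Rightarrow> real) \<Rightarrow> (nat \<Rightarrow> real) \<Rightarrow> real" where
  "Phi_polar m q A x u v = (\<Sum>i\<le>q. x (2*m+i) * bilinear_of (2*m) (A i) u v
      + u (2*m+i) * bilinear_of (2*m) (A i) x v + v (2*m+i) * bilinear_of (2*m) (A i) x u)"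

lemma polarization_Phi:
  assumes sym: "symmetric_system m q A"
  shows "polarization (Phi m q A) x u v = 2 * Phi_polar m q A x u v"
proof -
  have Phi_eq: "Phi m q A = (\<lambda>y. \<Sum>i\<le>q. y (2*m+i) * bilinear_of (2*m) (A i) y y)"
    unfolding Phi_def bilinear_of_def ..
  show ?thesis
    unfolding Phi_eq polarization_sum Phi_polar_def sum_distrib_left
  proof (intro sum.cong refl)
    fix i assume "i \<in> {..q}"
    then show "polarization (\<lambda>y. y (2*m+i) * bilinear_of (2*m) (A i) y y) x u v
      = 2 * (x (2*m+i) * bilinear_of (2*m) (A i) u v + u (2*m+i) * bilinear_of (2*m) (A i) x v
             + v (2*m+i) * bilinear_of (2*m) (A i) x u)"
      by (intro polarization_cubic_term[where b = "bilinear_of (2*m) (A i)"]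
          bilinear_of_add_left bilinear_of_add_right bilinear_of_commute
          symmetric_systemD[OF sym]) auto
  qed
qed

lemma Phi_polar_swap:
  assumes sym: "symmetric_system m q A"
  shows "Phi_polar m q A x u v = Phi_polar m q A x v u"
proof -
  have "bilinear_of (2*m) (A i) u v = bilinear_of (2*m) (A i) v u" if "i \<le> q" for i
    using that by (intro bilinear_of_commute symmetric_systemD[OF sym])
  then show ?thesis unfolding Phi_polar_def by (intro sum.cong refl) auto
qed

lemma Phi_polar_expand_left:
  "Phi_polar m q A x u v = (\<Sum>k<2*m+q+1. u k * Phi_polar m q A x (std_basis k) v)"
proof (rule linear_coordinate_expansion[where F = "\<lambda>u. Phi_polar m q A x u v"])
  fix u u' :: "nat \<Rightarrow> real"
  show "Phi_polar m q A x (u + u') v = Phi_polar m q A x u v + Phi_polar m q A x u' v"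
    unfolding Phi_polar_def
    by (simp add: bilinear_of_add_left bilinear_of_add_right sum.distrib[symmetric] algebra_simps)
next
  fix c and u :: "nat \<Rightarrow> real"
  show "Phi_polar m q A x (\<lambda>j. c * u j) v = c * Phi_polar m q A x u v"
    unfolding Phi_polar_def
    by (simp add: bilinear_of_scale_left bilinear_of_scale_right sum_distrib_left algebra_simps)
next
  fix u u' :: "nat \<Rightarrow> real"
  assume agree: "\<forall>j<2*m+q+1. u j = u' j"
  have "bilinear_of (2*m) S u w = bilinear_of (2*m) S u' w"
    and "bilinear_of (2*m) S w u = bilinear_of (2*m) S w u'" for S w
    unfolding bilinear_of_def using agree by (auto intro!: sum.cong)
  then show "Phi_polar m q A x u v = Phi_polar m q A x u' v"
    unfolding Phi_polar_def using agree by (intro sum.cong refl) auto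
qed

lemma Phi_polar_expand_right:
  assumes sym: "symmetric_system m q A"
  shows "Phi_polar m q A x u v = (\<Sum>l<2*m+q+1. v l * Phi_polar m q A x u (std_basis l))"
proof -
  have "Phi_polar m q A x u v = Phi_polar m q A x v u"
    by (rule Phi_polar_swap[OF sym])
  also have "\<dots> = (\<Sum>l<2*m+q+1. v l * Phi_polar m q A x (std_basis l) u)"
    by (rule Phi_polar_expand_left)
  also have "\<dots> = (\<Sum>l<2*m+q+1. v l * Phi_polar m q A x u (std_basis l))"
    by (intro sum.cong refl arg_cong2[where f = "(*)"] Phi_polar_swap[OF sym])
  finally show ?thesis .
qed

lemma Phi_polar_congruent:
  assumes symA: "symmetric_system m q A"
    and symB: "symmetric_system M Q B"
    and congr: "\<And>x. (\<forall>i\<ge>n. x i = 0) \<Longrightarrow> Phi m q A x = c * Phi M Q B (mat_apply n U x)"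
    and supp: "\<forall>i\<ge>n. x i = 0" "\<forall>i\<ge>n. u i = 0" "\<forall>i\<ge>n. v i = 0"
  shows "Phi_polar m q A x u v
       = c * Phi_polar M Q B (mat_apply n U x) (mat_apply n U u) (mat_apply n U v)"
  using polarization_congruent[where f = "Phi m q A" and g = "Phi M Q B", OF congr supp]
  by (simp add: polarization_Phi[OF symA] polarization_Phi[OF symB])

lemma Phi_polar_yy:
  assumes "a < 2*m" "b < 2*m"
  shows "Phi_polar m q A x (std_basis a) (std_basis b) = (\<Sum>i\<le>q. x (2*m+i) * A i a b)"
  unfolding Phi_polar_def using assms
  by (intro sum.cong refl)
     (simp add: bilinear_of_std_basis_left sum_std_basis_right std_basis_shift_below)

lemma Phi_polar_yz:
  assumes "a < 2*m" "j \<le> q"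
  shows "Phi_polar m q A x (std_basis a) (std_basis (2*m+j)) = (\<Sum>r<2*m. x r * A j r a)"
proof -
  have "Phi_polar m q A x (std_basis a) (std_basis (2*m+j))
      = (\<Sum>i\<le>q. if i = j then (\<Sum>r<2*m. x r * A i r a) else 0)"
    unfolding Phi_polar_def using assms
    by (intro sum.cong refl)
       (simp add: bilinear_of_std_basis_left bilinear_of_std_basis_right std_basis_below
         std_basis_shift_below std_basis_shift)
  then show ?thesis using assms(2) by simp
qed

lemma Phi_polar_zz: "Phi_polar m q A x (std_basis (2*m+i)) (std_basis (2*m+j)) = 0"
  unfolding Phi_polar_def by (simp add: bilinear_of_std_basis_left bilinear_of_std_basis_right)

section \<open>The trace form of a Clifford cubic\<close>

lemma clifford_system_symmetric:
  "clifford_system m q A \<Longrightarrow> i \<le> q \<Longrightarrow> r < 2*m \<Longrightarrow> s < 2*m \<Longrightarrow> A i r s = A i s r"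
  by (simp add: clifford_system_def)

lemma symmetric_system_clifford: "clifford_system m q A \<Longrightarrow> symmetric_system m q A"
  by (simp add: clifford_system_def symmetric_system_def)

lemma clifford_system_anticommute:
  "clifford_system m q A \<Longrightarrow> i \<le> q \<Longrightarrow> j \<le> q \<Longrightarrow> r < 2*m \<Longrightarrow> s < 2*m \<Longrightarrow>
    (\<Sum>k<2*m. A i r k * A j k s) + (\<Sum>k<2*m. A j r k * A i k s) = (if i = j \<and> r = s then 2 else 0)"
  unfolding clifford_system_def by blast

text \<open>Since A j is symmetric with square 1, it is orthogonal.\<close>

lemma clifford_rows_orthonormal:
  assumes A: "clifford_system m q A" and "j \<le> q" "r < 2*m" "r' < 2*m"
  shows "(\<Sum>a<2*m. A j r a * A j r' a) = (if r = r' then 1 else 0)"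
proof -
  have "(\<Sum>k<2*m. A j r k * A j k r') = (\<Sum>a<2*m. A j r a * A j r' a)"
    using assms by (intro sum.cong refl) (simp add: clifford_system_symmetric[OF A])
  with clifford_system_anticommute[OF A \<open>j \<le> q\<close> \<open>j \<le> q\<close> \<open>r < 2*m\<close> \<open>r' < 2*m\<close>]
  show ?thesis by (auto split: if_splits)
qed

lemma clifford_preserves_inner:
  assumes A: "clifford_system m q A" and j: "j \<le> q"
  shows "(\<Sum>a<2*m. (\<Sum>r<2*m. y r * A j r a) * (\<Sum>r<2*m. y' r * A j r a)) = (\<Sum>r<2*m. y r * y' r)"
  using orthonormal_rows_transpose_inner[of "2*m" "A j" y y'] clifford_rows_orthonormal[OF A j]
  by (simp add: mult.commute)

lemma clifford_frobenius_orthogonal: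
  assumes A: "clifford_system m q A" and "i \<le> q" "j \<le> q"
  shows "(\<Sum>a<2*m. \<Sum>b<2*m. A i a b * A j a b) = (if i = j then real (2*m) else 0)"
proof -
  have row: "(\<Sum>b<2*m. A i a b * A j a b) = (if i = j then 1 else 0)" if a: "a < 2*m" for a
  proof -
    have "(\<Sum>k<2*m. A i a k * A j k a) = (\<Sum>b<2*m. A i a b * A j a b)"
      and "(\<Sum>k<2*m. A j a k * A i k a) = (\<Sum>b<2*m. A i a b * A j a b)"
      using assms a by (auto intro!: sum.cong simp: clifford_system_symmetric[OF A])
    with clifford_system_anticommute[OF A \<open>i \<le> q\<close> \<open>j \<le> q\<close> a a]
    show ?thesis by (auto split: if_splits)
  qed
  then show ?thesis by simp
qed

lemma sum_product_linear_combinations: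
  fixes X :: "nat \<Rightarrow> nat \<Rightarrow> nat \<Rightarrow> real"
  shows "(\<Sum>a\<in>S. \<Sum>b\<in>T. (\<Sum>i\<in>I. f i * X i a b) * (\<Sum>j\<in>I. g j * X j a b))
       = (\<Sum>i\<in>I. \<Sum>j\<in>I. f i * g j * (\<Sum>a\<in>S. \<Sum>b\<in>T. X i a b * X j a b))"
proof -
  have "(\<Sum>a\<in>S. \<Sum>b\<in>T. (\<Sum>i\<in>I. f i * X i a b) * (\<Sum>j\<in>I. g j * X j a b))
      = (\<Sum>a\<in>S. \<Sum>b\<in>T. \<Sum>i\<in>I. \<Sum>j\<in>I. f i * g j * (X i a b * X j a b))"
    by (simp add: sum_product mult_ac)
  also have "\<dots> = (\<Sum>a\<in>S. \<Sum>i\<in>I. \<Sum>b\<in>T. \<Sum>j\<in>I. f i * g j * (X i a b * X j a b))"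
    by (rule sum.cong[OF refl], rule sum.swap)
  also have "\<dots> = (\<Sum>i\<in>I. \<Sum>a\<in>S. \<Sum>j\<in>I. \<Sum>b\<in>T. f i * g j * (X i a b * X j a b))"
    by (subst sum.swap) (intro sum.cong refl sum.swap)
  also have "\<dots> = (\<Sum>i\<in>I. \<Sum>j\<in>I. \<Sum>a\<in>S. \<Sum>b\<in>T. f i * g j * (X i a b * X j a b))"
    by (rule sum.cong[OF refl], rule sum.swap)
  also have "\<dots> = (\<Sum>i\<in>I. \<Sum>j\<in>I. f i * g j * (\<Sum>a\<in>S. \<Sum>b\<in>T. X i a b * X j a b))"
    by (simp add: sum_distrib_left)
  finally show ?thesis .
qed

lemma clifford_trace_product:
  assumes A: "clifford_system m q A"
  shows "(\<Sum>a<2*m. \<Sum>b<2*m. (\<Sum>i\<le>q. z i * A i a b) * (\<Sum>i\<le>q. z' i * A i a b))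
       = real (2*m) * (\<Sum>i\<le>q. z i * z' i)"
proof -
  have "(\<Sum>a<2*m. \<Sum>b<2*m. (\<Sum>i\<le>q. z i * A i a b) * (\<Sum>i\<le>q. z' i * A i a b))
      = (\<Sum>i\<le>q. \<Sum>j\<le>q. if j = i then z i * z' j * real (2*m) else 0)"
    unfolding sum_product_linear_combinations
    by (intro sum.cong refl) (simp add: clifford_frobenius_orthogonal[OF A])
  then show ?thesis by (simp add: sum_distrib_left mult_ac)
qed

lemma sum_lessThan_split_atMost:
  fixes N q :: nat
  shows "(\<Sum>a<N+q+1. f a) = (\<Sum>a<N. f a) + (\<Sum>j\<le>q. f (N+j))"
  by (induction q) (simp_all add: add.assoc)

definition clifford_weight :: "nat \<Rightarrow> nat \<Rightarrow> nat \<Rightarrow> real" where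
  "clifford_weight m q k = (if k < 2*m then real q + 1 else real m)"

lemma sum_clifford_weight: "(\<Sum>k<2*m+q+1. clifford_weight m q k) = 3 * real m * (real q + 1)"
  unfolding sum_lessThan_split_atMost clifford_weight_def by (simp add: algebra_simps)

lemma trace_form_Phi_polar:
  assumes A: "clifford_system m q A"
  shows "trace_form (2*m+q+1) (Phi_polar m q A) x x'
       = 2 * (\<Sum>k<2*m+q+1. clifford_weight m q k * x k * x' k)"
proof -
  let ?P = "\<lambda>y a b. Phi_polar m q A y (std_basis a) (std_basis b)"
  let ?y = "\<Sum>r<2*m. x r * x' r" and ?z = "\<Sum>i\<le>q. x (2*m+i) * x' (2*m+i)"
  note sym = symmetric_system_clifford[OF A]
  have yy: "(\<Sum>a<2*m. \<Sum>b<2*m. ?P x a b * ?P x' a b) = real (2*m) * ?z"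
    by (simp add: Phi_polar_yy clifford_trace_product[OF A])
  have yz: "(\<Sum>a<2*m. \<Sum>j\<le>q. ?P x a (2*m+j) * ?P x' a (2*m+j)) = (real q + 1) * ?y"
  proof -
    have "(\<Sum>a<2*m. \<Sum>j\<le>q. ?P x a (2*m+j) * ?P x' a (2*m+j))
        = (\<Sum>j\<le>q. \<Sum>a<2*m. (\<Sum>r<2*m. x r * A j r a) * (\<Sum>r<2*m. x' r * A j r a))"
      by (subst sum.swap) (simp add: Phi_polar_yz)
    then show ?thesis by (simp add: clifford_preserves_inner[OF A])
  qed
  have zy_entry: "?P y (2*m+i) b = (\<Sum>r<2*m. y r * A i r b)" if "b < 2*m" "i \<le> q" for y i b
    using Phi_polar_yz[OF that]
      Phi_polar_swap[OF sym, where x = y and u = "std_basis (2*m+i)" and v = "std_basis b"]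
    by simp
  have zy: "(\<Sum>i\<le>q. \<Sum>b<2*m. ?P x (2*m+i) b * ?P x' (2*m+i) b) = (real q + 1) * ?y"
    by (simp add: zy_entry clifford_preserves_inner[OF A])
  have zz: "(\<Sum>i\<le>q. \<Sum>j\<le>q. ?P x (2*m+i) (2*m+j) * ?P x' (2*m+i) (2*m+j)) = 0"
    by (simp add: Phi_polar_zz)
  have weights: "(\<Sum>k<2*m+q+1. clifford_weight m q k * x k * x' k) = (real q + 1) * ?y + real m * ?z"
    unfolding sum_lessThan_split_atMost clifford_weight_def
    by (simp add: sum_distrib_left mult.assoc)
  have "trace_form (2*m+q+1) (Phi_polar m q A) x x'
      = real (2*m) * ?z + (real q + 1) * ?y + ((real q + 1) * ?y + 0)"
    unfolding trace_form_def sum_lessThan_split_atMost sum.distrib yy yz zy zz ..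
  then show ?thesis unfolding weights by (simp add: algebra_simps)
qed

section \<open>Comparing the invariants\<close>

lemma clifford_weights_congruent:
  assumes A: "clifford_system m q A" and B: "clifford_system M Q B"
    and nA: "2*m + q + 1 = n" and nB: "2*M + Q + 1 = n"
    and U: "orthogonal_mat n U"
    and congr: "\<And>x. (\<forall>i\<ge>n. x i = 0) \<Longrightarrow> Phi m q A x = c * Phi M Q B (mat_apply n U x)"
    and supp: "\<forall>i\<ge>n. x i = 0" "\<forall>i\<ge>n. x' i = 0"
  shows "(\<Sum>k<n. clifford_weight m q k * x k * x' k)
       = c^2 * (\<Sum>k<n. clifford_weight M Q k * mat_apply n U x k * mat_apply n U x' k)"
proof -
  note symA = symmetric_system_clifford[OF A] and symB = symmetric_system_clifford[OF B]
  have "2 * (\<Sum>k<n. clifford_weight m q k * x k * x' k) = trace_form n (Phi_polar m q A) x x'"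
    using trace_form_Phi_polar[OF A, of x x', unfolded nA] by simp
  also have "\<dots> = c^2 * trace_form n (Phi_polar M Q B) (mat_apply n U x) (mat_apply n U x')"
    by (rule trace_form_orthogonal_congruent[where S = "Phi_polar m q A" and T = "Phi_polar M Q B",
          OF U Phi_polar_expand_left[of M Q B, unfolded nB] Phi_polar_expand_right[OF symB, unfolded nB]
          Phi_polar_congruent[OF symA symB congr] supp])
  also have "\<dots> = c^2 * (2 * (\<Sum>k<n. clifford_weight M Q k * mat_apply n U x k * mat_apply n U x' k))"
    using trace_form_Phi_polar[OF B, unfolded nB] by simp
  finally show ?thesis by simp
qed

lemma scaled_weights_force_eq:
  fixes C m q M Q :: real
  assumes C: "C > 0" and pos: "m \<ge> 1" "M \<ge> 1" "q \<ge> 1" "Q \<ge> 1"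
    and e1: "C*(Q+1) = q+1 \<or> C*(Q+1) = m" and e2: "C*M = q+1 \<or> C*M = m"
    and tr: "m*(q+1) = C*(M*(Q+1))" and dim: "2*m+q = 2*M+Q"
  shows "q = Q"
proof -
  \<comment> \<open>if C M and C (Q + 1) are m and q + 1 in some order, the trace identity forces C = 1\<close>
  have id: "C*(M*(Q+1))*(C-1) = (C*M)*(C*(Q+1)) - C*(M*(Q+1))" by (simp add: algebra_simps)
  have nz: "C*(M*(Q+1)) \<noteq> 0" using C pos by simp
  from e1 e2 show ?thesis
  proof (elim disjE)
    assume a: "C*(Q+1) = q+1" "C*M = m"
    have "C*(M*(Q+1))*(C-1) = 0" unfolding id a using tr by (simp add: mult.commute)
    then have "C = 1" using nz by simp
    then show ?thesis using a by simp
  next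
    assume a: "C*(Q+1) = q+1" "C*M = q+1"
    then have "C*M = C*(Q+1)" by simp
    then have "M = Q+1" using C by simp
    have "m*(q+1) = (Q+1)*(C*M)"
      using tr \<open>M = Q+1\<close> by (simp only: mult.commute mult.left_commute)
    then have "m*(q+1) = (Q+1)*(q+1)" using a by simp
    then have "m = Q+1" using pos by simp
    then show ?thesis using dim \<open>M = Q+1\<close> by simp
  next
    assume a: "C*(Q+1) = m" "C*M = q+1"
    have "C*(M*(Q+1))*(C-1) = 0" unfolding id a using tr by (simp add: mult.commute)
    then have "C = 1" using nz by simp
    then show ?thesis using a dim by simp
  next
    assume a: "C*(Q+1) = m" "C*M = m"
    have "m*(q+1) = m*(Q+1)" using tr a by (simp add: algebra_simps)
    then show ?thesis using pos by simp
  qed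
qed

theorem corollary2:
  fixes m M q Q n :: nat
    and A B :: "nat \<Rightarrow> nat \<Rightarrow> nat \<Rightarrow> real"
  assumes "m \<ge> 1" "M \<ge> 1" "q \<ge> 1" "Q \<ge> 1"
    and "2*m + q + 1 = n" "2*M + Q + 1 = n"
    and "clifford_system m q A" "clifford_system M Q B"
    and "congruent_on n (Phi m q A) (Phi M Q B)"
  shows "q = Q"
proof -
  obtain U c where U: "orthogonal_mat n U" and "c \<noteq> 0"
    and congr: "\<And>x. (\<forall>i\<ge>n. x i = 0) \<Longrightarrow> Phi m q A x = c * Phi M Q B (mat_apply n U x)"
    using assms(9) unfolding congruent_on_def by blast
  note weights = clifford_weights_congruent[OF assms(7,8,5,6) U congr]
  have "0 < n" "2*M < n" using assms(6) by auto
  obtain k1 where "k1 < n" and k1: "c^2 * clifford_weight M Q 0 = clifford_weight m q k1"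
    by (rule diagonal_congruent_eigenvalue[OF U _ \<open>0 < n\<close>]) (rule weights)
  obtain k2 where "k2 < n" and k2: "c^2 * clifford_weight M Q (2*M) = clifford_weight m q k2"
    by (rule diagonal_congruent_eigenvalue[OF U _ \<open>2*M < n\<close>]) (rule weights)
  have e1: "c^2 * (real Q + 1) = real q + 1 \<or> c^2 * (real Q + 1) = real m"
    using k1 assms(2) unfolding clifford_weight_def by (simp split: if_splits)
  have e2: "c^2 * real M = real q + 1 \<or> c^2 * real M = real m"
    using k2 unfolding clifford_weight_def by (simp split: if_splits)
  have "(\<Sum>k<n. clifford_weight m q k) = c^2 * (\<Sum>k<n. clifford_weight M Q k)"
    by (rule diagonal_congruent_trace[OF U]) (rule weights)
  then have "3 * real m * (real q + 1) = c^2 * (3 * real M * (real Q + 1))"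
    unfolding sum_clifford_weight[of m q, unfolded assms(5)]
      sum_clifford_weight[of M Q, unfolded assms(6)] .
  then have trace: "real m * (real q + 1) = c^2 * (real M * (real Q + 1))" by simp
  have "real q = real Q"
    by (rule scaled_weights_force_eq[OF _ _ _ _ _ e1 e2 trace])
      (use \<open>c \<noteq> 0\<close> assms(1-6) in auto)
  then show ?thesis by simp
qed

end
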